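(* Let $\mathcal{E}_{\mathrm{MUB}}$ be the minimal Clifford measurement ensemble described in the context, fix $U\in\mathcal{E}_{\mathrm{MUB}}$, and write $|\Phi_{U,\mathbf{b}}\rangle=U^{\dagger}|\mathbf{b}\rangle$. Let $O$ be a Hermitian observable with $O_{\mathbf{b},\mathbf{b}'}=\langle\Phi_{U,\mathbf{b}}|O|\Phi_{U,\mathbf{b}'}\rangle$, and let $O_F=\sum_{\mathbf{b}\ne\mathbf{b}'}O_{\mathbf{b},\mathbf{b}'}|\Phi_{U,\mathbf{b}}\rangle\langle\Phi_{U,\mathbf{b}'}|$ be its off-diagonal part in this basis. Then for every state $\rho$, the estimator $\widehat{O}_F=\operatorname{tr}(O_F\hat\rho)$ obtained from one snapshot of MCM shadow estimation with ensemble $\mathcal{E}_{\mathrm{MUB}}$ satisfies $$\mathrm{Var}_{\mathcal{E}_{\mathrm{MUB}}}(\widehat{O}_F)\le\frac{2^n+1}{2^n}\,C_{l_1}(O)^2,\qquad C_{l_1}(O):=\sum_{\mathbf{b}\ne\mathbf{b}'}|O_{\mathbf{b},\mathbf{b}'}|.$$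
   Context: Galois arithmetic: fix an irreducible polynomial $P_n(x)$ of degree $n$ over $\mathrm{GF}(2)$; integers $a=\sum_i a_i2^i\in\{0,\dots,2^n-1\}$ are identified with polynomials $\sum_ia_ix^i$ and row vectors $(a_0,\dots,a_{n-1})$, and $a\odot b=a(x)b(x)\bmod P_n(x)$. Let $\Gamma_{k,j}$ be the coefficient of $x^j$ in $x^k\bmod P_n$, and $M_n^{(0)}$ the $n\times n$ binary matrix with entries $\Gamma_{p+q,0}$. For $v\in\{0,\dots,2^n-1\}$ let $\alpha_{v,i,j}$ be the $j$-th entry of $(v\odot 2^i)M_n^{(0)}$ mod 2 and $g_i^{(v)}=\sqrt{-1}^{\,\alpha_{v,i,i}}X_i\prod_jZ_j^{\alpha_{v,i,j}}$ ($X_i,Z_i$ Paulis on qubit $i$). $\mathcal{E}_{\mathrm{MUB}}=\{\mathbb{I}\}\cup\{U_v\}_{v=0}^{2^n-1}$, where $U_v$ is a Clifford unitary with $U_v^{\dagger}Z_iU_v=\pm g_i^{(v)}$ for all $i$; these $2^n+1$ computational-basis-rotated bases form a complete set of mutually unbiased bases. MCM shadow estimation: pick $U'\in\mathcal{E}_{\mathrm{MUB}}$ uniformly, measure in the computational basis getting $\mathbf{b}$ with probability $\langle\mathbf{b}|U'\rho U'^{\dagger}|\mathbf{b}\rangle$, and set $\hat\rho=(2^n+1)U'^{\dagger}|\mathbf{b}\rangle\langle\mathbf{b}|U'-\mathbb{I}$. The variance is over $U'$ and $\mathbf{b}$. *)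

theory Defs
  imports "Berlekamp_Zassenhaus.Finite_Field" "HOL-Computational_Algebra.Polynomial"
          "Jordan_Normal_Form.Matrix"
begin

type_synonym gf2 = "bool mod_ring"

definition nat_to_poly :: "nat \<Rightarrow> nat \<Rightarrow> gf2 poly" where
  "nat_to_poly n a = (\<Sum>i<n. monom (if bit a i then 1 else 0) i)"

text \<open>Galois product a \<odot> b = a(x) b(x) mod P(x), as a polynomial (row vector of coefficients).\<close>
definition gf_mult :: "nat \<Rightarrow> gf2 poly \<Rightarrow> nat \<Rightarrow> nat \<Rightarrow> gf2 poly" where
  "gf_mult n P a b = (nat_to_poly n a * nat_to_poly n b) mod P"

definition Gamma :: "gf2 poly \<Rightarrow> nat \<Rightarrow> nat \<Rightarrow> gf2" where
  "Gamma P k j = coeff (monom 1 k mod P) j"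

definition M0 :: "gf2 poly \<Rightarrow> nat \<Rightarrow> nat \<Rightarrow> gf2" where
  "M0 P p q = Gamma P (p + q) 0"

text \<open>alpha v i j: j-th entry of the row vector (v \<odot> 2^i) M0, computed in GF(2) (i.e. mod 2).\<close>
definition alpha :: "nat \<Rightarrow> gf2 poly \<Rightarrow> nat \<Rightarrow> nat \<Rightarrow> nat \<Rightarrow> nat" where
  "alpha n P v i j = (if (\<Sum>p<n. coeff (gf_mult n P v (2 ^ i)) p * M0 P p j) = 0 then 0 else 1)"

section \<open>Qubit operators on (C^2)^{\<otimes> n}, basis |b\<rangle>, b < 2^n, bit i of b = qubit i\<close>

definition adj :: "complex mat \<Rightarrow> complex mat" where
  "adj A = mat (dim_col A) (dim_row A) (\<lambda>(i, j). cnj (A $$ (j, i)))"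

definition mtrace :: "complex mat \<Rightarrow> complex" where
  "mtrace A = (\<Sum>i<dim_row A. A $$ (i, i))"

definition ket :: "nat \<Rightarrow> nat \<Rightarrow> complex vec" where
  "ket n b = unit_vec (2 ^ n) b"

definition couter :: "complex vec \<Rightarrow> complex vec \<Rightarrow> complex mat" where
  "couter x y = mat (dim_vec x) (dim_vec y) (\<lambda>(r, s). x $ r * cnj (y $ s))"

definition cinner :: "complex vec \<Rightarrow> complex vec \<Rightarrow> complex" where
  "cinner x y = (\<Sum>k<dim_vec x. cnj (x $ k) * y $ k)"

definition Xq :: "nat \<Rightarrow> nat \<Rightarrow> complex mat" where
  "Xq n i = mat (2 ^ n) (2 ^ n) (\<lambda>(r, s). if r = Bit_Operations.xor s (2 ^ i) then 1 else 0)"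

definition Zq :: "nat \<Rightarrow> nat \<Rightarrow> complex mat" where
  "Zq n i = mat (2 ^ n) (2 ^ n) (\<lambda>(r, s). if r = s then (if bit s i then -1 else 1) else 0)"

definition mprod :: "nat \<Rightarrow> complex mat list \<Rightarrow> complex mat" where
  "mprod N Ms = foldr (*) Ms (1\<^sub>m N)"

definition gen_g :: "nat \<Rightarrow> gf2 poly \<Rightarrow> nat \<Rightarrow> nat \<Rightarrow> complex mat" where
  "gen_g n P v i = (\<i> ^ alpha n P v i i) \<cdot>\<^sub>m
     (Xq n i * mprod (2 ^ n) (map (\<lambda>j. Zq n j ^\<^sub>m alpha n P v i j) [0..<n]))"

definition is_unitary :: "nat \<Rightarrow> complex mat \<Rightarrow> bool" where
  "is_unitary n U \<longleftrightarrow> U \<in> carrier_mat (2 ^ n) (2 ^ n) \<and>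
     adj U * U = 1\<^sub>m (2 ^ n) \<and> U * adj U = 1\<^sub>m (2 ^ n)"

definition is_pauli :: "nat \<Rightarrow> complex mat \<Rightarrow> bool" where
  "is_pauli n M \<longleftrightarrow> (\<exists>ph (a::nat) (c::nat). ph \<in> {1, -1, \<i>, -\<i>} \<and> a < 2 ^ n \<and> c < 2 ^ n \<and>
     M = ph \<cdot>\<^sub>m (mprod (2 ^ n) (map (\<lambda>j. if bit a j then Xq n j else 1\<^sub>m (2 ^ n)) [0..<n]) *
                  mprod (2 ^ n) (map (\<lambda>j. if bit c j then Zq n j else 1\<^sub>m (2 ^ n)) [0..<n])))"

definition clifford :: "nat \<Rightarrow> complex mat \<Rightarrow> bool" where
  "clifford n U \<longleftrightarrow> is_unitary n U \<and>
     (\<forall>i<n. is_pauli n (U * Xq n i * adj U) \<and> is_pauli n (U * Zq n i * adj U))"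

definition mub_unitary :: "nat \<Rightarrow> gf2 poly \<Rightarrow> nat \<Rightarrow> complex mat \<Rightarrow> bool" where
  "mub_unitary n P v U \<longleftrightarrow> clifford n U \<and>
     (\<forall>i<n. adj U * Zq n i * U = gen_g n P v i \<or> adj U * Zq n i * U = - gen_g n P v i)"

text \<open>The ensemble E_MUB = {I} \<union> {U_v}: index None gives the identity, Some v gives U_v.
  Uniform sampling is over the 2^n+1 indices.\<close>
definition ens_index :: "nat \<Rightarrow> nat option set" where
  "ens_index n = insert None (Some ` {..<2 ^ n})"

definition ens :: "nat \<Rightarrow> (nat \<Rightarrow> complex mat) \<Rightarrow> nat option \<Rightarrow> complex mat" where
  "ens n U k = (case k of None \<Rightarrow> 1\<^sub>m (2 ^ n) | Some v \<Rightarrow> U v)"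

definition is_hermitian :: "nat \<Rightarrow> complex mat \<Rightarrow> bool" where
  "is_hermitian n A \<longleftrightarrow> A \<in> carrier_mat (2 ^ n) (2 ^ n) \<and> adj A = A"

definition is_density :: "nat \<Rightarrow> complex mat \<Rightarrow> bool" where
  "is_density n \<rho> \<longleftrightarrow> is_hermitian n \<rho> \<and> mtrace \<rho> = 1 \<and>
     (\<forall>x \<in> carrier_vec (2 ^ n). 0 \<le> Re (cinner x (\<rho> *\<^sub>v x)))"

definition phi :: "nat \<Rightarrow> complex mat \<Rightarrow> nat \<Rightarrow> complex vec" where
  "phi n U b = adj U *\<^sub>v ket n b"

definition Oel :: "nat \<Rightarrow> complex mat \<Rightarrow> complex mat \<Rightarrow> nat \<Rightarrow> nat \<Rightarrow> complex" where
  "Oel n U Ob b b' = cinner (phi n U b) (Ob *\<^sub>v phi n U b')"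

definition O_F :: "nat \<Rightarrow> complex mat \<Rightarrow> complex mat \<Rightarrow> complex mat" where
  "O_F n U Ob = mat (2 ^ n) (2 ^ n) (\<lambda>(r, s).
     \<Sum>b<2 ^ n. \<Sum>b'<2 ^ n. if b \<noteq> b' then
        Oel n U Ob b b' * (phi n U b) $ r * cnj ((phi n U b') $ s) else 0)"

definition C_l1 :: "nat \<Rightarrow> complex mat \<Rightarrow> complex mat \<Rightarrow> real" where
  "C_l1 n U Ob = (\<Sum>b<2 ^ n. \<Sum>b'<2 ^ n. if b \<noteq> b' then cmod (Oel n U Ob b b') else 0)"

definition shadow_prob :: "nat \<Rightarrow> complex mat \<Rightarrow> complex mat \<Rightarrow> nat \<Rightarrow> real" where
  "shadow_prob n \<rho> U' b = (1 / (2 ^ n + 1)) * Re ((U' * \<rho> * adj U') $$ (b, b))"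

definition snapshot :: "nat \<Rightarrow> complex mat \<Rightarrow> nat \<Rightarrow> complex mat" where
  "snapshot n U' b = (of_nat (2 ^ n + 1) \<cdot>\<^sub>m (adj U' * couter (ket n b) (ket n b) * U')) - 1\<^sub>m (2 ^ n)"

text \<open>Estimator tr(A rho_hat) (real, since A and rho_hat are Hermitian).\<close>
definition estimator :: "nat \<Rightarrow> complex mat \<Rightarrow> complex mat \<Rightarrow> nat \<Rightarrow> real" where
  "estimator n A U' b = Re (mtrace (A * snapshot n U' b))"

definition shadow_var :: "nat \<Rightarrow> (nat \<Rightarrow> complex mat) \<Rightarrow> complex mat \<Rightarrow> complex mat \<Rightarrow> real" where
  "shadow_var n U \<rho> A =
    (\<Sum>k\<in>ens_index n. \<Sum>b<2 ^ n. shadow_prob n \<rho> (ens n U k) b * (estimator n A (ens n U k) b)\<^sup>2)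
    - (\<Sum>k\<in>ens_index n. \<Sum>b<2 ^ n. shadow_prob n \<rho> (ens n U k) b * estimator n A (ens n U k) b)\<^sup>2"

end

theory Submission
  imports Defs
begin

text \<open>Let \<open>G = U U'\<^sup>\<dagger>\<close> for two distinct members \<open>U, U'\<close> of the ensemble. Each \<open>U\<^sup>\<dagger> Z_j U\<close> and
  \<open>U'\<^sup>\<dagger> Z_i U'\<close> is a Pauli monomial up to phase, so \<open>A_i = G Z_i G\<^sup>\<dagger>\<close> commutes or anticommutes
  with every \<open>Z_j\<close>. Such a unitary is a phased permutation of the computational basis that flips a
  fixed set of bits, and \<open>A_i G = G Z_i\<close> shows that \<open>|G_(b,x)|\<close> is invariant under these flips.
  For \<open>U = U_v\<close>, \<open>U' = U_v'\<close> the signs form the matrix \<open>\<Gamma>(w x^(i+j))\<close> with \<open>w = v + v' \<noteq> 0\<close>,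
  which is invertible over GF(2) because \<open>P\<close> is irreducible (against \<open>I\<close> they form the identity). Hence the flips act
  transitively, and \<open>|G_(b,x)|\<^sup>2 = 2^-n\<close>: the bases are mutually unbiased.

  Since \<open>tr O_F = 0\<close>, the estimator equals \<open>(2^n+1) Re \<langle>\<Phi>'_x|O_F|\<Phi>'_x\<rangle>\<close>. This is zero for \<open>U' = U\<close>,
  and otherwise mutual unbiasedness bounds it by \<open>(2^n+1) C_l1(O) / 2^n\<close>. Each of the \<open>2^n\<close> bases
  \<open>U' \<noteq> U\<close> is measured with total probability \<open>1/(2^n+1)\<close>, so the second moment, and hence the
  variance, is at most \<open>(2^n+1)/2^n C_l1(O)^2\<close>.\<close>

lemma adj_carrier_mat [simp]: "A \<in> carrier_mat m k \<Longrightarrow> adj A \<in> carrier_mat k m"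
  by (auto simp: adj_def)

lemma dim_adj [simp]: "dim_row (adj A) = dim_col A" "dim_col (adj A) = dim_row A"
  by (auto simp: adj_def)

lemma index_adj [simp]: "i < dim_col A \<Longrightarrow> j < dim_row A \<Longrightarrow> adj A $$ (i, j) = cnj (A $$ (j, i))"
  by (auto simp: adj_def)

lemma index_mult_mat_sum:
  "i < dim_row A \<Longrightarrow> j < dim_col B \<Longrightarrow> dim_col A = dim_row B \<Longrightarrow>
   (A * B) $$ (i, j) = (\<Sum>t<dim_row B. A $$ (i, t) * B $$ (t, j))"
  by (auto simp: scalar_prod_def atLeast0LessThan intro!: sum.cong)

lemma adj_mult:
  assumes "A \<in> carrier_mat m k" "B \<in> carrier_mat k l"
  shows "adj (A * B) = adj B * adj A"
  by (rule eq_matI) (use assms in \<open>auto simp: index_mult_mat_sum mult.commute simp del: index_mult_mat(1)\<close>)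

lemma adj_adj [simp]: "adj (adj A) = A"
  by (rule eq_matI) auto

lemma adj_one_mat [simp]: "adj (1\<^sub>m N) = 1\<^sub>m N"
  by (rule eq_matI) auto

lemma mult_assoc_square:
  "A \<in> carrier_mat d d \<Longrightarrow> B \<in> carrier_mat d d \<Longrightarrow> C \<in> carrier_mat d d \<Longrightarrow> A * B * C = A * (B * C)"
  by (rule assoc_mult_mat) auto

lemma mult_carrier_square:
  "A \<in> carrier_mat d d \<Longrightarrow> B \<in> carrier_mat d d \<Longrightarrow> A * B \<in> carrier_mat d d"
  by (rule mult_carrier_mat)

lemma smult_mult_square:
  fixes A B :: "'a :: comm_semiring_0 mat"
  assumes "A \<in> carrier_mat d d" "B \<in> carrier_mat d d"
  shows "(k \<cdot>\<^sub>m A) * B = k \<cdot>\<^sub>m (A * B)" "A * (k \<cdot>\<^sub>m B) = k \<cdot>\<^sub>m (A * B)"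
  using assms by (simp_all add: mult_smult_assoc_mat mult_smult_distrib)

lemmas square_mat_simps = mult_assoc_square mult_carrier_square smult_mult_square

lemma smult_smult_mat: "a \<cdot>\<^sub>m (b \<cdot>\<^sub>m A) = (a * b) \<cdot>\<^sub>m (A :: 'a :: semigroup_mult mat)"
  by (rule eq_matI) (auto simp: mult.assoc)

lemma cnj_mult_self: "cnj z * z = complex_of_real ((cmod z)\<^sup>2)"
  by (simp only: complex_norm_square mult.commute)

lemma mtrace_mult_comm:
  assumes A: "A \<in> carrier_mat d m" and B: "B \<in> carrier_mat m d"
  shows "mtrace (A * B) = mtrace (B * A)"
proof -
  have "mtrace (A * B) = (\<Sum>i<d. \<Sum>t<m. A $$ (i, t) * B $$ (t, i))"
    using A B by (simp add: mtrace_def index_mult_mat_sum del: index_mult_mat(1))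
  also have "\<dots> = (\<Sum>t<m. \<Sum>i<d. B $$ (t, i) * A $$ (i, t))"
    by (subst sum.swap) (simp add: mult.commute)
  also have "\<dots> = mtrace (B * A)"
    using A B by (simp add: mtrace_def index_mult_mat_sum del: index_mult_mat(1))
  finally show ?thesis .
qed

lemma is_unitary_carrier: "is_unitary n V \<Longrightarrow> V \<in> carrier_mat (2 ^ n) (2 ^ n)"
  by (simp add: is_unitary_def)

lemma is_unitary_one: "is_unitary n (1\<^sub>m (2 ^ n))"
  by (simp add: is_unitary_def)

lemma unitary_mult_cancel:
  assumes "is_unitary n V" "X \<in> carrier_mat (2 ^ n) (2 ^ n)"
  shows "adj V * (V * X) = X" "V * (adj V * X) = X"
  using assms mult_assoc_square[of "adj V" "2 ^ n" V X] mult_assoc_square[of V "2 ^ n" "adj V" X]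
  by (auto simp: is_unitary_def)

lemma is_unitary_mult_adj:
  assumes "is_unitary n V" "is_unitary n W"
  shows "is_unitary n (V * adj W)"
proof -
  have c: "V \<in> carrier_mat (2 ^ n) (2 ^ n)" "W \<in> carrier_mat (2 ^ n) (2 ^ n)"
    using assms by (auto simp: is_unitary_carrier)
  then have "adj (V * adj W) = W * adj V"
    using adj_mult[OF c(1) adj_carrier_mat[OF c(2)]] by simp
  then show ?thesis
    using assms c by (simp add: is_unitary_def square_mat_simps[where d="2 ^ n"] unitary_mult_cancel)
qed

lemma unitary_row_orthonormal:
  assumes "is_unitary n V" "k < 2 ^ n" "l < 2 ^ n"
  shows "(\<Sum>a<2 ^ n. V $$ (k, a) * cnj (V $$ (l, a))) = (if k = l then 1 else 0)"
proof -
  have "(V * adj V) $$ (k, l) = (if k = l then 1 else 0)"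
    using assms by (simp add: is_unitary_def)
  then show ?thesis
    using assms is_unitary_carrier[OF assms(1)] by (simp add: index_mult_mat_sum del: index_mult_mat(1))
qed

lemma unitary_col_norm:
  assumes "adj A * A = 1\<^sub>m d" "A \<in> carrier_mat d d" "m < d"
  shows "(\<Sum>t<d. (cmod (A $$ (t, m)))\<^sup>2) = 1"
proof -
  have "(adj A * A) $$ (m, m) = 1"
    using assms by simp
  then have "(\<Sum>t<d. cnj (A $$ (t, m)) * A $$ (t, m)) = 1"
    using assms(2,3) by (simp add: index_mult_mat_sum carrier_matD del: index_mult_mat(1))
  then have "complex_of_real (\<Sum>t<d. (cmod (A $$ (t, m)))\<^sup>2) = 1"
    by (simp only: cnj_mult_self of_real_sum)
  then show ?thesis
    using of_real_eq_1_iff by blast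
qed

lemma unitary_col_uniform_norm:
  assumes "adj G * G = 1\<^sub>m (2 ^ n)" "G \<in> carrier_mat (2 ^ n) (2 ^ n)" "x < 2 ^ n"
    and "\<forall>s<2 ^ n. cmod (G $$ (s, x)) = c"
  shows "c\<^sup>2 = 1 / 2 ^ n"
proof -
  have "(\<Sum>s<2 ^ n. (cmod (G $$ (s, x)))\<^sup>2) = 2 ^ n * c\<^sup>2"
    using assms(4) by simp
  then show ?thesis
    using unitary_col_norm[OF assms(1-3)] by (simp add: field_simps)
qed

lemma prod_pm_one:
  assumes "\<forall>i\<in>S. f i = 1 \<or> f i = (-1 :: 'a :: comm_ring_1)"
  shows "prod f S = 1 \<or> prod f S = -1"
  using assms by (induction S rule: infinite_finite_induct) auto

lemma pm_one_mult_eq_neg_one: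
  "(x::complex) = 1 \<or> x = -1 \<Longrightarrow> y = 1 \<or> y = -1 \<Longrightarrow> (x * y = -1) = ((x = -1) \<noteq> (y = -1))"
  by auto

lemma prod_sym_diff_pm_one:
  fixes f :: "'b \<Rightarrow> 'a :: comm_ring_1"
  assumes "finite S" "finite T" "\<And>i. f i = 1 \<or> f i = -1"
  shows "prod f ((S - T) \<union> (T - S)) = prod f S * prod f T"
proof -
  have "prod f (S \<inter> T) * prod f (S \<inter> T) = 1"
    using prod_pm_one[of "S \<inter> T" f] assms(3) by auto
  moreover have "prod f S = prod f (S \<inter> T) * prod f (S - T)"
    "prod f T = prod f (S \<inter> T) * prod f (T - S)"
    using prod.Int_Diff[OF assms(1), of _ T] prod.Int_Diff[OF assms(2), of _ S] by (auto simp: Int_commute)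
  moreover have "prod f ((S - T) \<union> (T - S)) = prod f (S - T) * prod f (T - S)"
    using assms(1,2) by (intro prod.union_disjoint) auto
  ultimately show ?thesis
    by (simp add: ac_simps)
qed

lemma xor_less_pow2: "(s::nat) < 2 ^ n \<Longrightarrow> a < 2 ^ n \<Longrightarrow> xor s a < 2 ^ n"
  by (metis take_bit_nat_eq_self take_bit_xor take_bit_nat_less_exp)

lemma bit_imp_less: "(v::nat) < 2 ^ n \<Longrightarrow> bit v k \<Longrightarrow> k < n"
  by (metis bit_take_bit_iff take_bit_nat_eq_self)

lemma eq_if_bits_below: "(s::nat) < 2 ^ n \<Longrightarrow> t < 2 ^ n \<Longrightarrow> (\<forall>j<n. bit s j = bit t j) \<Longrightarrow> s = t"
  by (metis bit_eq_iff bit_imp_less)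

section \<open>Pauli monomials\<close>

definition zsign :: "nat set \<Rightarrow> nat \<Rightarrow> complex" where
  "zsign C s = (\<Prod>l\<in>C. if bit s l then -1 else 1)"

text \<open>\<open>pauli_mat n a C\<close> is the Pauli monomial \<open>X^a Z^C\<close>: it sends \<open>|s\<rangle>\<close> to \<open>zsign C s |s xor a\<rangle>\<close>.\<close>
definition pauli_mat :: "nat \<Rightarrow> nat \<Rightarrow> nat set \<Rightarrow> complex mat" where
  "pauli_mat n a C = mat (2 ^ n) (2 ^ n) (\<lambda>(r, s). if r = xor s a then zsign C s else 0)"

lemma zsign_xor: "zsign C (xor s a) = zsign C s * zsign C a"
  unfolding zsign_def
  by (cases "finite C") (auto simp: prod.distrib[symmetric] bit_xor_iff intro!: prod.cong)

lemma zsign_mult_self: "zsign C a * zsign C a = 1"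
  unfolding zsign_def
  by (cases "finite C") (auto simp: prod.distrib[symmetric] intro!: prod.neutral)

lemma zsign_pm_one: "zsign C a = 1 \<or> zsign C a = -1"
  unfolding zsign_def by (rule prod_pm_one) simp

lemma zsign_mult_pm_one: "zsign C a * zsign C' a' = 1 \<or> zsign C a * zsign C' a' = -1"
  using zsign_pm_one[of C a] zsign_pm_one[of C' a'] by auto

lemma zsign_0 [simp]: "zsign C 0 = 1"
  by (simp add: zsign_def)

lemma zsign_pow2: "finite C \<Longrightarrow> zsign C (2 ^ i) = (if i \<in> C then -1 else 1)"
  unfolding zsign_def by (simp add: bit_exp_iff prod.delta)

lemma zsign_singleton: "zsign {j} s = (if bit s j then -1 else 1)"
  by (simp add: zsign_def)

lemma zsign_insert: "finite C \<Longrightarrow> j \<notin> C \<Longrightarrow> zsign (insert j C) s = (if bit s j then -1 else 1) * zsign C s"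
  by (simp add: zsign_def)

lemma pauli_mat_carrier [simp]: "pauli_mat n a C \<in> carrier_mat (2 ^ n) (2 ^ n)"
  by (simp add: pauli_mat_def)

lemma dim_pauli_mat [simp]: "dim_row (pauli_mat n a C) = 2 ^ n" "dim_col (pauli_mat n a C) = 2 ^ n"
  by (auto simp: pauli_mat_def)

lemma index_pauli_mat:
  "r < 2 ^ n \<Longrightarrow> s < 2 ^ n \<Longrightarrow> pauli_mat n a C $$ (r, s) = (if r = xor s a then zsign C s else 0)"
  by (simp add: pauli_mat_def)

lemma index_pauli_mat_mult:
  assumes "r < 2 ^ n" "s < 2 ^ n" "a' < 2 ^ n"
  shows "(pauli_mat n a C * pauli_mat n a' C') $$ (r, s) =
     (if r = xor (xor s a') a then zsign C (xor s a') * zsign C' s else 0)"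
proof -
  have "(pauli_mat n a C * pauli_mat n a' C') $$ (r, s) =
     (\<Sum>t<2 ^ n. pauli_mat n a C $$ (r, t) * pauli_mat n a' C' $$ (t, s))"
    using assms by (simp add: index_mult_mat_sum del: index_mult_mat(1))
  also have "\<dots> = (\<Sum>t<2 ^ n. if t = xor s a' then (if r = xor t a then zsign C t * zsign C' s else 0) else 0)"
    using assms by (intro sum.cong refl) (auto simp: index_pauli_mat)
  finally show ?thesis
    using assms xor_less_pow2[of s n a'] by (simp add: sum.delta)
qed

lemma pauli_mat_commute:
  assumes "a < 2 ^ n" "a' < 2 ^ n"
  shows "pauli_mat n a C * pauli_mat n a' C' =
    (zsign C a' * zsign C' a) \<cdot>\<^sub>m (pauli_mat n a' C' * pauli_mat n a C)"
proof (rule eq_matI)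
  fix r s assume "r < dim_row ((zsign C a' * zsign C' a) \<cdot>\<^sub>m (pauli_mat n a' C' * pauli_mat n a C))"
    "s < dim_col ((zsign C a' * zsign C' a) \<cdot>\<^sub>m (pauli_mat n a' C' * pauli_mat n a C))"
  then have r: "r < 2 ^ n" and s: "s < 2 ^ n" by auto
  have "xor (xor s a) a' = xor (xor s a') a" by (simp add: ac_simps)
  moreover have "zsign C (xor s a') * zsign C' s = zsign C a' * zsign C' a * (zsign C' (xor s a) * zsign C s)"
    by (simp add: zsign_xor) (metis mult.assoc mult.left_commute mult_1 zsign_mult_self)
  ultimately show "(pauli_mat n a C * pauli_mat n a' C') $$ (r, s) =
      ((zsign C a' * zsign C' a) \<cdot>\<^sub>m (pauli_mat n a' C' * pauli_mat n a C)) $$ (r, s)"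
    using r s assms by (simp add: index_pauli_mat_mult del: index_mult_mat(1))
qed auto

lemma Zq_eq_pauli_mat: "Zq n j = pauli_mat n 0 {j}"
  by (rule eq_matI) (auto simp: Zq_def pauli_mat_def zsign_singleton)

lemma Xq_eq_pauli_mat: "Xq n i = pauli_mat n (2 ^ i) {}"
  by (rule eq_matI) (auto simp: Xq_def pauli_mat_def zsign_def)

lemma one_mat_eq_pauli_mat: "1\<^sub>m (2 ^ n) = pauli_mat n 0 {}"
  by (rule eq_matI) (auto simp: pauli_mat_def zsign_def)

lemma Zq_carrier [simp]: "Zq n j \<in> carrier_mat (2 ^ n) (2 ^ n)"
  by (simp add: Zq_def)

lemma dim_Zq [simp]: "dim_row (Zq n j) = 2 ^ n" "dim_col (Zq n j) = 2 ^ n"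
  by (auto simp: Zq_def)

lemma adj_Zq: "adj (Zq n j) = Zq n j"
  by (rule eq_matI) (auto simp: Zq_def)

lemma Zq_mult_Zq: "Zq n j * Zq n j = 1\<^sub>m (2 ^ n)"
  by (rule eq_matI) (auto simp: Zq_eq_pauli_mat index_pauli_mat_mult zsign_mult_self simp del: index_mult_mat(1))

lemma Zq_mult_Zq_cancel: "X \<in> carrier_mat (2 ^ n) k \<Longrightarrow> Zq n j * (Zq n j * X) = X"
  using assoc_mult_mat[of "Zq n j" "2 ^ n" "2 ^ n" "Zq n j" "2 ^ n" X k] by (simp add: Zq_mult_Zq)

lemma index_Zq_mult:
  assumes "t < 2 ^ n" "m < 2 ^ n" "A \<in> carrier_mat (2 ^ n) (2 ^ n)"
  shows "(Zq n j * A) $$ (t, m) = (if bit t j then -1 else 1) * A $$ (t, m)"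
proof -
  have "(Zq n j * A) $$ (t, m) = (\<Sum>u<2 ^ n. Zq n j $$ (t, u) * A $$ (u, m))"
    using assms by (simp add: index_mult_mat_sum del: index_mult_mat(1))
  also have "\<dots> = (\<Sum>u<2 ^ n. if t = u then (if bit u j then -1 else 1) * A $$ (u, m) else 0)"
    using assms by (intro sum.cong refl) (simp add: Zq_def)
  finally show ?thesis using assms by simp
qed

lemma index_mult_Zq:
  assumes "t < 2 ^ n" "m < 2 ^ n" "A \<in> carrier_mat (2 ^ n) (2 ^ n)"
  shows "(A * Zq n j) $$ (t, m) = A $$ (t, m) * (if bit m j then -1 else 1)"
proof -
  have "(A * Zq n j) $$ (t, m) = (\<Sum>u<2 ^ n. A $$ (t, u) * Zq n j $$ (u, m))"
    using assms by (simp add: index_mult_mat_sum del: index_mult_mat(1))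
  also have "\<dots> = (\<Sum>u<2 ^ n. if u = m then A $$ (t, u) * (if bit m j then -1 else 1) else 0)"
    using assms by (intro sum.cong refl) (simp add: Zq_def)
  finally show ?thesis using assms by simp
qed

section \<open>Sign-commuting unitaries and mutually unbiased stabilizer bases\<close>

lemma conj_Zq_unitary:
  fixes i :: nat
  assumes "is_unitary n G"
  defines "A \<equiv> G * Zq n i * adj G"
  shows "A \<in> carrier_mat (2 ^ n) (2 ^ n)" and "A * G = G * Zq n i" and "adj A * A = 1\<^sub>m (2 ^ n)"
proof -
  have G: "G \<in> carrier_mat (2 ^ n) (2 ^ n)" "adj G * G = 1\<^sub>m (2 ^ n)"
    using assms by (auto simp: is_unitary_def)
  show "A \<in> carrier_mat (2 ^ n) (2 ^ n)"
    unfolding A_def using G by (simp add: mult_carrier_square[where d="2 ^ n"])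
  show "A * G = G * Zq n i"
    unfolding A_def using G by (simp add: square_mat_simps[where d="2 ^ n"])
  have "adj A = A"
    unfolding A_def using G adj_mult[of "G * Zq n i" "2 ^ n" "2 ^ n" "adj G" "2 ^ n"]
      adj_mult[of G "2 ^ n" "2 ^ n" "Zq n i" "2 ^ n"]
    by (simp add: adj_Zq square_mat_simps[where d="2 ^ n"])
  then show "adj A * A = 1\<^sub>m (2 ^ n)"
    unfolding A_def using assms G
    by (simp add: square_mat_simps[where d="2 ^ n"] unitary_mult_cancel Zq_mult_Zq_cancel[where k="2 ^ n"] is_unitary_def)
qed

lemma conj_commute_sign:
  assumes V: "is_unitary n V" and H: "H \<in> carrier_mat (2 ^ n) (2 ^ n)"
    and comm: "(adj V * Zq n j * V) * H = c \<cdot>\<^sub>m (H * (adj V * Zq n j * V))"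
  shows "Zq n j * (V * H * adj V) = c \<cdot>\<^sub>m (V * H * adj V * Zq n j)"
proof -
  let ?P = "adj V * Zq n j * V"
  have c: "V \<in> carrier_mat (2 ^ n) (2 ^ n)" "?P \<in> carrier_mat (2 ^ n) (2 ^ n)"
    using V by (auto simp: is_unitary_carrier mult_carrier_square[where d="2 ^ n"])
  have Z: "Zq n j = V * ?P * adj V"
    using V c by (simp add: square_mat_simps[where d="2 ^ n"] unitary_mult_cancel is_unitary_def)
  have "Zq n j * (V * H * adj V) = V * (?P * H) * adj V"
    by (subst Z) (use V c H in \<open>simp add: square_mat_simps[where d="2 ^ n"] unitary_mult_cancel\<close>)
  also have "\<dots> = c \<cdot>\<^sub>m (V * H * (adj V * (V * ?P * adj V)))"
    unfolding comm using V c H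
    by (simp add: square_mat_simps[where d="2 ^ n"] unitary_mult_cancel)
  also have "\<dots> = c \<cdot>\<^sub>m (V * H * adj V * Zq n j)"
    using V c H by (simp add: square_mat_simps[where d="2 ^ n"]
        unitary_mult_cancel is_unitary_def)
  finally show ?thesis .
qed

lemma sign_commuting_entry_bits:
  assumes A: "A \<in> carrier_mat (2 ^ n) (2 ^ n)" and comm: "Zq n j * A = e \<cdot>\<^sub>m (A * Zq n j)"
    and e: "e = 1 \<or> e = -1" and t: "t < 2 ^ n" and u: "u < 2 ^ n" and nz: "A $$ (t, u) \<noteq> 0"
  shows "bit t j = (bit u j \<noteq> (e = -1))"
proof -
  have "(Zq n j * A) $$ (t, u) = (e \<cdot>\<^sub>m (A * Zq n j)) $$ (t, u)"
    using comm by simp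
  then have "(if bit t j then -1 else 1) * A $$ (t, u) = e * (A $$ (t, u) * (if bit u j then -1 else 1))"
    using t u A by (simp add: index_Zq_mult index_mult_Zq del: index_mult_mat(1))
  then have "(if bit t j then -1 else 1) = e * (if bit u j then -1 else (1::complex))"
    using nz by (simp add: field_simps)
  then show ?thesis
    using e by (cases "bit t j"; cases "bit u j") auto
qed

text \<open>That is, \<open>A\<close> is a phased permutation matrix whose permutation flips exactly the bits \<open>j\<close>
  with \<open>e j = -1\<close>.\<close>
lemma sign_commuting_unitary_monomial:
  assumes A: "A \<in> carrier_mat (2 ^ n) (2 ^ n)" and unit: "adj A * A = 1\<^sub>m (2 ^ n)"
    and comm: "\<forall>j<n. Zq n j * A = e j \<cdot>\<^sub>m (A * Zq n j)"
    and e: "\<forall>j<n. e j = 1 \<or> e j = -1" and m: "m < 2 ^ n"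
  obtains t where "t < 2 ^ n" "\<forall>j<n. bit t j = (bit m j \<noteq> (e j = -1))"
    "cmod (A $$ (t, m)) = 1" "\<forall>u<2 ^ n. u \<noteq> m \<longrightarrow> A $$ (t, u) = 0"
proof -
  have bits: "\<forall>j<n. bit t j = (bit u j \<noteq> (e j = -1))"
    if "t < 2 ^ n" "u < 2 ^ n" "A $$ (t, u) \<noteq> 0" for t u
    using sign_commuting_entry_bits[OF A] comm e that by blast
  have col: "(\<Sum>t<2 ^ n. (cmod (A $$ (t, m)))\<^sup>2) = 1"
    using unitary_col_norm[OF unit A m] .
  then obtain t where t: "t < 2 ^ n" "A $$ (t, m) \<noteq> 0"
    by (metis (no_types, lifting) lessThan_iff norm_zero power_zero_numeral sum.neutral zero_neq_one)
  have "A $$ (t', m) = 0" if "t' < 2 ^ n" "t' \<noteq> t" for t'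
  proof (rule ccontr)
    assume "A $$ (t', m) \<noteq> 0"
    then have "\<forall>j<n. bit t' j = bit t j"
      using bits[OF that(1) m] bits[OF t(1) m t(2)] by simp
    then show False
      using eq_if_bits_below[OF that(1) t(1)] that(2) by blast
  qed
  then have "(\<Sum>t'<2 ^ n. (cmod (A $$ (t', m)))\<^sup>2) = (cmod (A $$ (t, m)))\<^sup>2"
    using t(1) by (subst sum.remove[of _ t]) (auto intro!: sum.neutral)
  then have "cmod (A $$ (t, m)) = 1"
    using col norm_ge_zero[of "A $$ (t, m)"] by (auto simp: power2_eq_1_iff)
  moreover have "A $$ (t, u) = 0" if "u < 2 ^ n" "u \<noteq> m" for u
  proof (rule ccontr)
    assume "A $$ (t, u) \<noteq> 0"
    then have "\<forall>j<n. bit u j = bit m j"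
      using bits[OF t(1) that(1)] bits[OF t(1) m t(2)] by auto
    then show False
      using eq_if_bits_below[OF that(1) m] that(2) by blast
  qed
  ultimately show thesis
    using that t bits[OF t(1) m t(2)] by blast
qed

lemma intertwiner_flip_preserves_norm:
  assumes A: "A \<in> carrier_mat (2 ^ n) (2 ^ n)" and unit: "adj A * A = 1\<^sub>m (2 ^ n)"
    and comm: "\<forall>j<n. Zq n j * A = e j \<cdot>\<^sub>m (A * Zq n j)" and e: "\<forall>j<n. e j = 1 \<or> e j = -1"
    and G: "G \<in> carrier_mat (2 ^ n) (2 ^ n)" and AG: "A * G = G * Zq n i"
    and m: "m < 2 ^ n" and x: "x < 2 ^ n"
  obtains t where "t < 2 ^ n" "\<forall>j<n. bit t j = (bit m j \<noteq> (e j = -1))"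
    "cmod (G $$ (t, x)) = cmod (G $$ (m, x))"
proof -
  obtain t where t: "t < 2 ^ n" "\<forall>j<n. bit t j = (bit m j \<noteq> (e j = -1))"
    "cmod (A $$ (t, m)) = 1" "\<forall>u<2 ^ n. u \<noteq> m \<longrightarrow> A $$ (t, u) = 0"
    using sign_commuting_unitary_monomial[OF A unit comm e m] by blast
  have "(A * G) $$ (t, x) = (\<Sum>u<2 ^ n. A $$ (t, u) * G $$ (u, x))"
    using A G t(1) x by (simp add: index_mult_mat_sum del: index_mult_mat(1))
  also have "\<dots> = A $$ (t, m) * G $$ (m, x)"
    using t(4) m by (subst sum.remove[of _ m]) (auto intro!: sum.neutral)
  finally have "G $$ (t, x) * (if bit x i then -1 else 1) = A $$ (t, m) * G $$ (m, x)"
    using AG G t(1) x by (simp add: index_mult_Zq del: index_mult_mat(1))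
  then have "cmod (G $$ (t, x) * (if bit x i then -1 else 1)) = cmod (A $$ (t, m) * G $$ (m, x))"
    by (simp only:)
  then have "cmod (G $$ (t, x)) = cmod (G $$ (m, x))"
    using t(3) by (cases "bit x i") (simp_all add: norm_mult)
  with t show thesis
    using that by blast
qed

lemma conj_Zq_flip:
  assumes uV: "is_unitary n V" and uV': "is_unitary n V'"
    and hV: "\<forall>j<n. \<exists>\<omega>. adj V * Zq n j * V = \<omega> \<cdot>\<^sub>m pauli_mat n (a j) (C j)"
    and hV': "adj V' * Zq n i * V' = \<omega>' \<cdot>\<^sub>m pauli_mat n a' C'"
    and ha: "\<forall>j<n. a j < 2 ^ n" and ha': "a' < 2 ^ n" and m: "m < 2 ^ n" and x: "x < 2 ^ n"
  obtains t where "t < 2 ^ n" "\<forall>j<n. bit t j = (bit m j \<noteq> (zsign (C j) a' * zsign C' (a j) = -1))"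
    "cmod ((V * adj V') $$ (t, x)) = cmod ((V * adj V') $$ (m, x))"
proof -
  let ?G = "V * adj V'" and ?H = "adj V' * Zq n i * V'"
  have uG: "is_unitary n ?G"
    using is_unitary_mult_adj[OF uV uV'] .
  have c: "V \<in> carrier_mat (2 ^ n) (2 ^ n)" "V' \<in> carrier_mat (2 ^ n) (2 ^ n)"
    "?H \<in> carrier_mat (2 ^ n) (2 ^ n)" "?G \<in> carrier_mat (2 ^ n) (2 ^ n)"
    using uV uV' by (auto simp: is_unitary_carrier mult_carrier_square[where d="2 ^ n"])
  have "adj ?G = V' * adj V"
    using adj_mult[OF c(1) adj_carrier_mat[OF c(2)]] by simp
  then have A: "?G * Zq n i * adj ?G = V * ?H * adj V"
    using c by (simp add: square_mat_simps[where d="2 ^ n"])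
  have comm: "\<forall>j<n. Zq n j * (?G * Zq n i * adj ?G) =
      (zsign (C j) a' * zsign C' (a j)) \<cdot>\<^sub>m (?G * Zq n i * adj ?G * Zq n j)"
  proof (intro allI impI)
    fix j assume j: "j < n"
    obtain \<omega> where hj: "adj V * Zq n j * V = \<omega> \<cdot>\<^sub>m pauli_mat n (a j) (C j)"
      using hV j by blast
    have "(adj V * Zq n j * V) * ?H = (zsign (C j) a' * zsign C' (a j)) \<cdot>\<^sub>m (?H * (adj V * Zq n j * V))"
      unfolding hj hV' using pauli_mat_commute[OF ha[rule_format, OF j] ha', of "C j" C']
      by (simp add: square_mat_simps[where d="2 ^ n"] smult_smult_mat ac_simps)
    then show "Zq n j * (?G * Zq n i * adj ?G) =
        (zsign (C j) a' * zsign C' (a j)) \<cdot>\<^sub>m (?G * Zq n i * adj ?G * Zq n j)"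
      unfolding A using conj_commute_sign[OF uV c(3)] by blast
  qed
  have pm: "\<forall>j<n. zsign (C j) a' * zsign C' (a j) = 1 \<or> zsign (C j) a' * zsign C' (a j) = -1"
    using zsign_mult_pm_one by blast
  show thesis
    using intertwiner_flip_preserves_norm[OF conj_Zq_unitary(1,3)[OF uG] comm pm c(4)
        conj_Zq_unitary(2)[OF uG] m x] that by blast
qed

lemma flip_invariant_on_orbit:
  fixes f :: "nat \<Rightarrow> 'a" and \<epsilon> :: "nat \<Rightarrow> nat \<Rightarrow> complex"
  assumes "finite S"
    and flip: "\<And>i m. i \<in> S \<Longrightarrow> m < 2 ^ n \<Longrightarrow>
      \<exists>t<2 ^ n. (\<forall>j<n. bit t j = (bit m j \<noteq> (\<epsilon> i j = -1))) \<and> f t = f m"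
    and pm: "\<And>i j. \<epsilon> i j = 1 \<or> \<epsilon> i j = -1"
    and "b < 2 ^ n" "s < 2 ^ n" "\<forall>j<n. bit s j = (bit b j \<noteq> ((\<Prod>i\<in>S. \<epsilon> i j) = -1))"
  shows "f s = f b"
  using assms(1,4-) flip
proof (induction S arbitrary: s rule: finite_induct)
  case empty
  then show ?case
    using eq_if_bits_below[of s n b] by simp
next
  case (insert i S)
  obtain t where t: "t < 2 ^ n" "\<forall>j<n. bit t j = (bit s j \<noteq> (\<epsilon> i j = -1))" "f t = f s"
    using insert.prems(2,4) by blast
  have "\<forall>j<n. bit t j = (bit b j \<noteq> ((\<Prod>i\<in>S. \<epsilon> i j) = -1))"
  proof (intro allI impI)
    fix j assume "j < n"
    moreover have "(\<Prod>i\<in>S. \<epsilon> i j) = 1 \<or> (\<Prod>i\<in>S. \<epsilon> i j) = -1"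
      using pm by (intro prod_pm_one) blast
    then have "((\<Prod>i\<in>insert i S. \<epsilon> i j) = -1) = ((\<epsilon> i j = -1) \<noteq> ((\<Prod>i\<in>S. \<epsilon> i j) = -1))"
      using insert.hyps pm_one_mult_eq_neg_one[OF pm] by simp
    ultimately show "bit t j = (bit b j \<noteq> ((\<Prod>i\<in>S. \<epsilon> i j) = -1))"
      using t(2) insert.prems(3) by auto
  qed
  then have "f t = f b"
    using insert.IH[OF insert.prems(1) t(1)] insert.prems(4) by blast
  then show ?case
    using t(3) by simp
qed

text \<open>Read over GF(2), this says that the sign matrix is invertible: no nonempty set of its rows
  sums to zero.\<close>
definition nondegenerate_signs :: "nat \<Rightarrow> (nat \<Rightarrow> nat \<Rightarrow> complex) \<Rightarrow> bool" where
  "nondegenerate_signs n \<epsilon> \<longleftrightarrow> (\<forall>S\<subseteq>{..<n}. S \<noteq> {} \<longrightarrow> (\<exists>j<n. (\<Prod>i\<in>S. \<epsilon> i j) = -1))"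

lemma nondegenerate_signs_inj:
  assumes nd: "nondegenerate_signs n \<epsilon>" and pm: "\<And>i j. \<epsilon> i j = 1 \<or> \<epsilon> i j = -1"
  shows "inj_on (\<lambda>S. {j \<in> {..<n}. (\<Prod>i\<in>S. \<epsilon> i j) = -1}) (Pow {..<n})"
proof (rule inj_onI)
  fix S S' assume S: "S \<in> Pow {..<n}" and S': "S' \<in> Pow {..<n}"
    and eq: "{j \<in> {..<n}. (\<Prod>i\<in>S. \<epsilon> i j) = -1} = {j \<in> {..<n}. (\<Prod>i\<in>S'. \<epsilon> i j) = -1}"
  have fin: "finite S" "finite S'"
    using S S' finite_subset by auto
  have "(\<Prod>i\<in>(S - S') \<union> (S' - S). \<epsilon> i j) \<noteq> -1" if "j < n" for j
  proof -
    have pm_prod: "(\<Prod>i\<in>X. \<epsilon> i j) = 1 \<or> (\<Prod>i\<in>X. \<epsilon> i j) = -1" for X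
      using pm by (intro prod_pm_one) blast
    have "j \<in> {j \<in> {..<n}. (\<Prod>i\<in>S. \<epsilon> i j) = -1} \<longleftrightarrow> j \<in> {j \<in> {..<n}. (\<Prod>i\<in>S'. \<epsilon> i j) = -1}"
      by (simp only: eq)
    then have "((\<Prod>i\<in>S. \<epsilon> i j) = -1) = ((\<Prod>i\<in>S'. \<epsilon> i j) = -1)"
      using that by simp
    then have "(\<Prod>i\<in>S. \<epsilon> i j) = (\<Prod>i\<in>S'. \<epsilon> i j)"
      using pm_prod[of S] pm_prod[of S'] by auto
    moreover have "(\<Prod>i\<in>S. \<epsilon> i j) * (\<Prod>i\<in>S. \<epsilon> i j) = 1"
      using pm_prod[of S] by auto
    ultimately show ?thesis
      using prod_sym_diff_pm_one[OF fin, of "\<lambda>i. \<epsilon> i j"] pm by simp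
  qed
  moreover have "(S - S') \<union> (S' - S) \<subseteq> {..<n}"
    using S S' by auto
  ultimately have "(S - S') \<union> (S' - S) = {}"
    using nd unfolding nondegenerate_signs_def by blast
  then show "S = S'"
    by auto
qed

lemma nondegenerate_signs_surj:
  assumes nd: "nondegenerate_signs n \<epsilon>" and pm: "\<And>i j. \<epsilon> i j = 1 \<or> \<epsilon> i j = -1"
    and T: "T \<subseteq> {..<n}"
  obtains S where "S \<subseteq> {..<n}" "{j \<in> {..<n}. (\<Prod>i\<in>S. \<epsilon> i j) = -1} = T"
proof -
  let ?f = "\<lambda>S. {j \<in> {..<n}. (\<Prod>i\<in>S. \<epsilon> i j) = -1}"
  have sub: "?f ` Pow {..<n} \<subseteq> Pow {..<n}"
    by auto
  have "?f ` Pow {..<n} = Pow {..<n}"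
    by (rule endo_inj_surj[OF _ sub nondegenerate_signs_inj[OF nd pm]]) simp
  then have "T \<in> ?f ` Pow {..<n}"
    using T by simp
  then obtain S where "S \<in> Pow {..<n}" "T = ?f S"
    by (rule imageE)
  then show thesis
    by (intro that[of S]) simp_all
qed

text \<open>The bit flips given by the rows of a nondegenerate sign matrix generate all of \<open>GF(2)^n\<close>.\<close>
lemma flip_invariant_const:
  fixes f :: "nat \<Rightarrow> 'a"
  assumes nd: "nondegenerate_signs n \<epsilon>" and pm: "\<And>i j. \<epsilon> i j = 1 \<or> \<epsilon> i j = -1"
    and flip: "\<And>i m. i \<in> {..<n} \<Longrightarrow> m < 2 ^ n \<Longrightarrow>
      \<exists>t<2 ^ n. (\<forall>j<n. bit t j = (bit m j \<noteq> (\<epsilon> i j = -1))) \<and> f t = f m"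
    and s: "s < 2 ^ n"
  shows "f s = f 0"
proof -
  obtain S where S: "S \<subseteq> {..<n}" "{j \<in> {..<n}. (\<Prod>i\<in>S. \<epsilon> i j) = -1} = {j \<in> {..<n}. bit s j}"
    using nondegenerate_signs_surj[OF nd pm, of "{j \<in> {..<n}. bit s j}"] by auto
  then have bits: "\<forall>j<n. bit s j = (bit (0::nat) j \<noteq> ((\<Prod>i\<in>S. \<epsilon> i j) = -1))"
    by (auto simp: set_eq_iff)
  have fin: "finite S"
    using S(1) finite_subset by blast
  have pos: "(0::nat) < 2 ^ n"
    by simp
  show ?thesis
    by (rule flip_invariant_on_orbit[OF fin flip[OF subsetD[OF S(1)]] pm pos s bits])
qed

lemma mutually_unbiased_if_nondegenerate_signs:
  assumes uV: "is_unitary n V" and uV': "is_unitary n V'"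
    and hV: "\<forall>j<n. \<exists>\<omega>. adj V * Zq n j * V = \<omega> \<cdot>\<^sub>m pauli_mat n (a j) (C j)"
    and hV': "\<forall>i<n. \<exists>\<omega>. adj V' * Zq n i * V' = \<omega> \<cdot>\<^sub>m pauli_mat n (a' i) (C' i)"
    and ha: "\<forall>j<n. a j < 2 ^ n" and ha': "\<forall>i<n. a' i < 2 ^ n"
    and nd: "nondegenerate_signs n (\<lambda>i j. zsign (C j) (a' i) * zsign (C' i) (a j))"
    and b: "b < 2 ^ n" and x: "x < 2 ^ n"
  shows "(cmod ((V * adj V') $$ (b, x)))\<^sup>2 = 1 / 2 ^ n"
proof -
  define \<epsilon> where "\<epsilon> i j = zsign (C j) (a' i) * zsign (C' i) (a j)" for i j
  define g where "g t = cmod ((V * adj V') $$ (t, x))" for t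
  have pm: "\<epsilon> i j = 1 \<or> \<epsilon> i j = -1" for i j
    unfolding \<epsilon>_def by (rule zsign_mult_pm_one)
  have flip: "\<exists>t<2 ^ n. (\<forall>j<n. bit t j = (bit m j \<noteq> (\<epsilon> i j = -1))) \<and> g t = g m"
    if i: "i \<in> {..<n}" and m: "m < 2 ^ n" for i m
  proof -
    have "i < n"
      using i by simp
    then obtain \<omega>' where "adj V' * Zq n i * V' = \<omega>' \<cdot>\<^sub>m pauli_mat n (a' i) (C' i)"
      using hV' by blast
    moreover have "a' i < 2 ^ n"
      using ha' i by simp
    ultimately obtain t where "t < 2 ^ n" "\<forall>j<n. bit t j = (bit m j \<noteq> (\<epsilon> i j = -1))" "g t = g m"
      using conj_Zq_flip[OF uV uV' hV _ ha _ m x] unfolding \<epsilon>_def g_def by blast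
    then show ?thesis
      by blast
  qed
  have const: "g s = g 0" if "s < 2 ^ n" for s
    using flip_invariant_const[OF nd[folded \<epsilon>_def] pm flip that] .
  have "adj (V * adj V') * (V * adj V') = 1\<^sub>m (2 ^ n)" "V * adj V' \<in> carrier_mat (2 ^ n) (2 ^ n)"
    using is_unitary_mult_adj[OF uV uV'] unfolding is_unitary_def by auto
  moreover have "\<forall>s<2 ^ n. cmod ((V * adj V') $$ (s, x)) = g 0"
    using const unfolding g_def by blast
  ultimately have "(g 0)\<^sup>2 = 1 / 2 ^ n"
    by (rule unitary_col_uniform_norm[OF _ _ x])
  then show ?thesis
    using const[OF b] unfolding g_def by simp
qed

section \<open>The Galois-field ensemble\<close>

lemma gf2_eq_0_or_1: "(a::gf2) = 0 \<or> a = 1"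
proof -
  obtain i where "i < CARD(bool)" "a = of_nat i"
    using surj_of_nat_mod_ring by blast
  moreover have "i = 0 \<or> i = 1"
    using calculation(1) by auto
  ultimately show ?thesis
    by auto
qed

lemma gf2_one_plus_one: "(1::gf2) + 1 = 0"
  using of_nat_card_eq_0[where 'a = bool] by simp

definition gf2_sign :: "gf2 \<Rightarrow> complex" where
  "gf2_sign x = (if x = 0 then 1 else -1)"

lemma gf2_sign_add: "gf2_sign (x + y) = gf2_sign x * gf2_sign y"
  using gf2_eq_0_or_1[of x] gf2_eq_0_or_1[of y] gf2_one_plus_one by (auto simp: gf2_sign_def)

lemma gf2_sign_sum: "gf2_sign (\<Sum>i\<in>S. f i) = (\<Prod>i\<in>S. gf2_sign (f i))"
proof (induction S rule: infinite_finite_induct)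
  case (insert x F)
  then show ?case
    by (simp add: gf2_sign_add)
qed (auto simp: gf2_sign_def)

text \<open>\<open>coeff0_mod P q\<close> is the GF(2)-linear form \<open>q \<mapsto> \<Gamma>(q mod P)\<close> reading off the constant
  coefficient; the matrix \<open>M0\<close> is its Hankel matrix on the monomials.\<close>
definition coeff0_mod :: "gf2 poly \<Rightarrow> gf2 poly \<Rightarrow> gf2" where
  "coeff0_mod P q = coeff (q mod P) 0"

lemma coeff0_mod_add: "coeff0_mod P (p + q) = coeff0_mod P p + coeff0_mod P q"
  by (simp add: coeff0_mod_def poly_mod_add_left)

lemma coeff0_mod_smult: "coeff0_mod P (smult c p) = c * coeff0_mod P p"
  by (simp add: coeff0_mod_def mod_smult_left)

lemma coeff0_mod_0 [simp]: "coeff0_mod P 0 = 0"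
  by (simp add: coeff0_mod_def)

lemma coeff0_mod_sum: "coeff0_mod P (\<Sum>i\<in>S. f i) = (\<Sum>i\<in>S. coeff0_mod P (f i))"
  by (induction S rule: infinite_finite_induct) (auto simp: coeff0_mod_add)

lemma coeff0_mod_mod_mult: "coeff0_mod P ((p mod P) * q) = coeff0_mod P (p * q)"
  by (simp add: coeff0_mod_def mod_mult_left_eq)

lemma M0_eq_coeff0_mod: "M0 P p j = coeff0_mod P (monom 1 (p + j))"
  by (simp add: M0_def Gamma_def coeff0_mod_def)

lemma coeff_nat_to_poly: "coeff (nat_to_poly n a) k = (if k < n \<and> bit a k then 1 else 0)"
  unfolding nat_to_poly_def coeff_sum coeff_monom by simp

lemma nat_to_poly_pow2: "i < n \<Longrightarrow> nat_to_poly n (2 ^ i) = monom 1 i"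
  by (rule poly_eqI) (auto simp: coeff_nat_to_poly coeff_monom bit_exp_iff)

lemma poly_eq_sum_low_monoms:
  assumes "\<forall>k\<ge>n. coeff (u::'a::comm_ring_1 poly) k = 0"
  shows "u = (\<Sum>p<n. smult (coeff u p) (monom 1 p))"
proof (rule poly_eqI)
  fix k
  have "(\<Sum>p<n. coeff u p * (if p = k then 1 else 0)) = (\<Sum>p<n. if p = k then coeff u k else 0)"
    by (intro sum.cong refl) auto
  also have "\<dots> = coeff u k"
    using assms by (auto simp: sum.delta)
  finally show "coeff u k = coeff (\<Sum>p<n. smult (coeff u p) (monom 1 p)) k"
    by (simp add: coeff_sum coeff_monom)
qed

lemma coeff_mod_eq_0: "P \<noteq> 0 \<Longrightarrow> degree P \<le> k \<Longrightarrow> coeff (q mod P) k = 0"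
  using degree_mod_less[of P q] by (auto intro: coeff_eq_0)

lemma alpha_eq_coeff0_mod:
  assumes P: "P \<noteq> 0" "degree P = n" and i: "i < n"
  shows "alpha n P v i j = (if coeff0_mod P (nat_to_poly n v * monom 1 (i + j)) = 0 then 0 else 1)"
proof -
  define u where "u = gf_mult n P v (2 ^ i)"
  have u: "u = (nat_to_poly n v * monom 1 i) mod P"
    unfolding u_def gf_mult_def using nat_to_poly_pow2[OF i] by simp
  have "(\<Sum>p<n. coeff u p * M0 P p j) = coeff0_mod P ((\<Sum>p<n. smult (coeff u p) (monom 1 p)) * monom 1 j)"
    by (simp add: M0_eq_coeff0_mod coeff0_mod_smult coeff0_mod_sum sum_distrib_right mult_monom)
  also have "\<dots> = coeff0_mod P (u * monom 1 j)"
    using poly_eq_sum_low_monoms[of n u] coeff_mod_eq_0[OF P(1)] P(2) unfolding u by simp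
  also have "\<dots> = coeff0_mod P (nat_to_poly n v * monom 1 (i + j))"
    unfolding u coeff0_mod_mod_mult by (simp add: mult.assoc mult_monom)
  finally show ?thesis
    unfolding alpha_def u_def by simp
qed

text \<open>If \<open>z\<close> is invertible modulo \<open>P\<close> with inverse \<open>y = \<Sum>j. y_j x^j\<close>, then
  \<open>1 = \<Gamma>(y z mod P) = \<Sum>j. y_j \<Gamma>(x^j z mod P)\<close>.\<close>
lemma coeff0_mod_nondegenerate:
  assumes irr: "irreducible P" and nz: "\<not> P dvd z"
  shows "\<exists>j<degree P. coeff0_mod P (z * monom 1 j) \<noteq> 0"
proof (rule ccontr)
  assume con: "\<not> ?thesis"
  have P0: "P \<noteq> 0" and "degree P \<noteq> 0"
    using irr by (auto simp: is_unit_iff_degree)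
  then have one: "(1::gf2 poly) mod P = 1"
    by (intro mod_poly_less) simp
  have "coprime z P"
    using prime_elem_imp_coprime[OF irreducible_imp_prime_elem[OF irr] nz] by (simp add: ac_simps)
  then obtain y t where "y * z + t * P = 1"
    by (metis bezout_coefficients_fst_snd coprime_imp_gcd_eq_1)
  then have "(y * z) mod P = 1"
    using one by (metis mod_mult_self1 add.commute)
  then have "coeff0_mod P ((y mod P) * z) = 1"
    unfolding coeff0_mod_mod_mult by (simp add: coeff0_mod_def)
  moreover have "y mod P = (\<Sum>j<degree P. smult (coeff (y mod P) j) (monom 1 j))"
    using coeff_mod_eq_0[OF P0] by (intro poly_eq_sum_low_monoms) simp
  then have "coeff0_mod P ((y mod P) * z) =
      coeff0_mod P ((\<Sum>j<degree P. smult (coeff (y mod P) j) (monom 1 j)) * z)"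
    by (rule arg_cong)
  then have "coeff0_mod P ((y mod P) * z) = (\<Sum>j<degree P. coeff (y mod P) j * coeff0_mod P (monom 1 j * z))"
    by (simp add: sum_distrib_right coeff0_mod_sum coeff0_mod_smult)
  ultimately show False
    using con by (simp add: mult.commute)
qed

lemma irreducible_not_dvd_mult_low_degree:
  assumes irr: "irreducible P" and "w \<noteq> 0" "q \<noteq> 0" "degree w < degree P" "degree q < degree P"
  shows "\<not> P dvd w * (q :: gf2 poly)"
proof -
  have "\<not> P dvd w" "\<not> P dvd q"
    using assms dvd_imp_degree_le[of P w] dvd_imp_degree_le[of P q] by auto
  then show ?thesis
    using prime_elem_dvd_mult_iff[OF irreducible_imp_prime_elem[OF irr]] by blast
qed

lemma degree_less_if_high_coeffs_0: "p \<noteq> 0 \<Longrightarrow> \<forall>k\<ge>n. coeff p k = 0 \<Longrightarrow> degree p < n"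
  by (metis leading_coeff_0_iff not_less)

lemma Zq_pow_le_1: "f \<le> 1 \<Longrightarrow> Zq n j ^\<^sub>m f = (if f = 1 then Zq n j else 1\<^sub>m (2 ^ n))"
  by (cases f) (auto simp: left_mult_one_mat[OF Zq_carrier])

lemma mprod_Zq_pow:
  assumes "distinct xs" "\<forall>j. f j \<le> 1"
  shows "mprod (2 ^ n) (map (\<lambda>j. Zq n j ^\<^sub>m f j) xs) = pauli_mat n 0 {j \<in> set xs. f j = 1}"
  using assms
proof (induction xs)
  case Nil
  then show ?case
    by (simp add: mprod_def one_mat_eq_pauli_mat)
next
  case (Cons j xs)
  let ?C = "{l \<in> set xs. f l = 1}"
  have IH: "mprod (2 ^ n) (map (\<lambda>j. Zq n j ^\<^sub>m f j) (j # xs)) = Zq n j ^\<^sub>m f j * pauli_mat n 0 ?C"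
    using Cons by (simp add: mprod_def)
  show ?case
  proof (cases "f j = 1")
    case False
    then have "{l \<in> set (j # xs). f l = 1} = ?C"
      by auto
    then show ?thesis
      using False Cons.prems IH by (simp add: Zq_pow_le_1)
  next
    case True
    have "j \<notin> ?C"
      using Cons.prems by auto
    then have "Zq n j * pauli_mat n 0 ?C = pauli_mat n 0 (insert j ?C)"
      by (intro eq_matI) (auto simp: Zq_eq_pauli_mat index_pauli_mat_mult index_pauli_mat zsign_insert
          zsign_singleton simp del: index_mult_mat(1))
    moreover have "{l \<in> set (j # xs). f l = 1} = insert j ?C"
      using True by auto
    ultimately show ?thesis
      using True IH by (simp add: Zq_pow_le_1)
  qed
qed

definition zset :: "nat \<Rightarrow> gf2 poly \<Rightarrow> nat \<Rightarrow> nat \<Rightarrow> nat set" where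
  "zset n P v i = {j \<in> set [0..<n]. alpha n P v i j = 1}"

lemma gen_g_eq_pauli_mat:
  assumes i: "i < n"
  shows "gen_g n P v i = (\<i> ^ alpha n P v i i) \<cdot>\<^sub>m pauli_mat n (2 ^ i) (zset n P v i)"
proof -
  have "mprod (2 ^ n) (map (\<lambda>j. Zq n j ^\<^sub>m alpha n P v i j) [0..<n]) = pauli_mat n 0 (zset n P v i)"
    unfolding zset_def by (rule mprod_Zq_pow) (auto simp: alpha_def)
  moreover have "Xq n i * pauli_mat n 0 (zset n P v i) = pauli_mat n (2 ^ i) (zset n P v i)"
    using i by (intro eq_matI) (auto simp: Xq_eq_pauli_mat index_pauli_mat_mult index_pauli_mat zsign_def
        simp del: index_mult_mat(1))
  ultimately show ?thesis
    unfolding gen_g_def by simp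
qed

lemma mub_unitary_is_unitary: "mub_unitary n P v V \<Longrightarrow> is_unitary n V"
  by (simp add: mub_unitary_def clifford_def)

lemma mub_unitary_conj_Zq:
  assumes "mub_unitary n P v V"
  shows "\<forall>j<n. \<exists>\<omega>. adj V * Zq n j * V = \<omega> \<cdot>\<^sub>m pauli_mat n (2 ^ j) (zset n P v j)"
proof (intro allI impI)
  fix j assume j: "j < n"
  have "adj V * Zq n j * V = gen_g n P v j \<or> adj V * Zq n j * V = - gen_g n P v j"
    using assms j by (simp add: mub_unitary_def)
  moreover have "- (c \<cdot>\<^sub>m pauli_mat n (2 ^ j) (zset n P v j)) = (- c) \<cdot>\<^sub>m pauli_mat n (2 ^ j) (zset n P v j)" for c
    by (rule eq_matI) auto
  ultimately show "\<exists>\<omega>. adj V * Zq n j * V = \<omega> \<cdot>\<^sub>m pauli_mat n (2 ^ j) (zset n P v j)"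
    using gen_g_eq_pauli_mat[OF j, of P v] by metis
qed

lemma one_conj_Zq: "\<forall>j<n. \<exists>\<omega>. adj (1\<^sub>m (2 ^ n)) * Zq n j * 1\<^sub>m (2 ^ n) = \<omega> \<cdot>\<^sub>m pauli_mat n 0 {j}"
proof (intro allI impI exI)
  fix j
  show "adj (1\<^sub>m (2 ^ n)) * Zq n j * 1\<^sub>m (2 ^ n) = 1 \<cdot>\<^sub>m pauli_mat n 0 {j}"
    by (rule eq_matI) (auto simp: Zq_eq_pauli_mat[symmetric])
qed

lemma zsign_zset_pow2:
  assumes "P \<noteq> 0" "degree P = n" "j < n" "i < n"
  shows "zsign (zset n P v j) (2 ^ i) = gf2_sign (coeff0_mod P (nat_to_poly n v * monom 1 (i + j)))"
  using alpha_eq_coeff0_mod[OF assms(1-3), of v i] assms(4)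
  by (simp add: zsign_pow2 zset_def gf2_sign_def add.commute)

lemma nondegenerate_signs_delta:
  assumes "\<And>i j. i < n \<Longrightarrow> j < n \<Longrightarrow> \<epsilon> i j = (if i = j then -1 else 1)"
  shows "nondegenerate_signs n \<epsilon>"
  unfolding nondegenerate_signs_def
proof (intro allI impI)
  fix S assume S: "S \<subseteq> {..<n}" "S \<noteq> {}"
  then obtain j where j: "j \<in> S" "j < n"
    by auto
  have "(\<Prod>i\<in>S. \<epsilon> i j) = (\<Prod>i\<in>S. if i = j then -1 else 1)"
    using S j assms by (intro prod.cong refl) auto
  also have "\<dots> = -1"
    using finite_subset[OF S(1)] j by simp
  finally show "\<exists>j<n. (\<Prod>i\<in>S. \<epsilon> i j) = -1"
    using j by blast
qed

lemma nat_to_poly_add_nonzero: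
  assumes "v < 2 ^ n" "v' < 2 ^ n" "v \<noteq> v'"
  shows "nat_to_poly n v + nat_to_poly n v' \<noteq> 0" "degree (nat_to_poly n v + nat_to_poly n v') < n"
proof -
  let ?w = "nat_to_poly n v + nat_to_poly n v'"
  have w_coeff: "coeff ?w k = (if k < n \<and> bit v k then 1 else 0) + (if k < n \<and> bit v' k then 1 else 0)" for k
    by (simp add: coeff_nat_to_poly)
  show "?w \<noteq> 0"
  proof
    assume "?w = 0"
    have "bit v k = bit v' k" if "k < n" for k
    proof -
      have "(if bit v k then 1 else 0) + (if bit v' k then 1 else (0::gf2)) = 0"
        using \<open>?w = 0\<close> w_coeff[of k] that by simp
      then show ?thesis
        by (auto split: if_splits)
    qed
    then show False
      using eq_if_bits_below[OF assms(1,2)] assms(3) by blast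
  qed
  then show "degree ?w < n"
    using w_coeff by (intro degree_less_if_high_coeffs_0) auto
qed

lemma sum_monom_nonzero:
  assumes "S \<subseteq> {..<n}" "S \<noteq> {}"
  shows "(\<Sum>i\<in>S. monom (1::gf2) i) \<noteq> 0" "degree (\<Sum>i\<in>S. monom (1::gf2) i) < n"
proof -
  have q_coeff: "coeff (\<Sum>i\<in>S. monom (1::gf2) i) k = (if k \<in> S then 1 else 0)" for k
    unfolding coeff_sum coeff_monom using finite_subset[OF assms(1)] by simp
  then show "(\<Sum>i\<in>S. monom (1::gf2) i) \<noteq> 0"
    using assms(2) by (metis all_not_in_conv coeff_0 one_neq_zero)
  then show "degree (\<Sum>i\<in>S. monom (1::gf2) i) < n"
    using q_coeff assms(1) by (intro degree_less_if_high_coeffs_0) auto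
qed

text \<open>The sign matrix of \<open>U_v\<close> against \<open>U_v'\<close> is the Hankel matrix \<open>\<Gamma>(w x^(i+j))\<close> of
  \<open>w = v + v' \<noteq> 0\<close>. The rows indexed by \<open>S\<close> sum to the functional \<open>j \<mapsto> \<Gamma>(w q x^j)\<close> with
  \<open>q = \<Sum>i\<in>S. x^i\<close>, which is nonzero because \<open>w q\<close> is a unit modulo \<open>P\<close>.\<close>
lemma nondegenerate_signs_mub:
  assumes irr: "irreducible P" and dP: "degree P = n"
    and v: "v < 2 ^ n" "v' < 2 ^ n" "v \<noteq> v'"
  shows "nondegenerate_signs n (\<lambda>i j. zsign (zset n P v j) (2 ^ i) * zsign (zset n P v' i) (2 ^ j))"
  unfolding nondegenerate_signs_def
proof (intro allI impI)
  fix S assume S: "S \<subseteq> {..<n}" "S \<noteq> {}"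
  have P0: "P \<noteq> 0"
    using irr by auto
  define w where "w = nat_to_poly n v + nat_to_poly n v'"
  define q where "q = (\<Sum>i\<in>S. monom (1::gf2) i)"
  obtain j where j: "j < n" "coeff0_mod P (w * q * monom 1 j) \<noteq> 0"
    using coeff0_mod_nondegenerate[OF irr irreducible_not_dvd_mult_low_degree[OF irr]] dP
      nat_to_poly_add_nonzero[OF v] sum_monom_nonzero[OF S] unfolding w_def q_def by auto
  have "(\<Prod>i\<in>S. zsign (zset n P v j) (2 ^ i) * zsign (zset n P v' i) (2 ^ j))
      = (\<Prod>i\<in>S. gf2_sign (coeff0_mod P (w * monom 1 (i + j))))"
  proof (rule prod.cong[OF refl])
    fix i assume "i \<in> S"
    then have i: "i < n"
      using S by auto
    show "zsign (zset n P v j) (2 ^ i) * zsign (zset n P v' i) (2 ^ j) = gf2_sign (coeff0_mod P (w * monom 1 (i + j)))"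
      using zsign_zset_pow2[OF P0 dP j(1) i, of v] zsign_zset_pow2[OF P0 dP i j(1), of v']
      by (simp add: w_def distrib_right coeff0_mod_add gf2_sign_add add.commute)
  qed
  also have "\<dots> = gf2_sign (coeff0_mod P (w * q * monom 1 j))"
    unfolding q_def gf2_sign_sum[symmetric] coeff0_mod_sum[symmetric]
    by (simp add: sum_distrib_left sum_distrib_right mult.assoc mult_monom)
  also have "\<dots> = -1"
    using j(2) by (simp add: gf2_sign_def)
  finally show "\<exists>j<n. (\<Prod>i\<in>S. zsign (zset n P v j) (2 ^ i) * zsign (zset n P v' i) (2 ^ j)) = -1"
    using j(1) by blast
qed

lemma ens_is_unitary:
  assumes "k \<in> ens_index n" "\<forall>v<2 ^ n. mub_unitary n P v (U v)"
  shows "is_unitary n (ens n U k)"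
  using assms by (auto simp: ens_index_def ens_def is_unitary_one mub_unitary_is_unitary)

lemma mub_unitary_unbiased_computational:
  assumes u: "mub_unitary n P v V" and b: "b < 2 ^ n" and x: "x < 2 ^ n"
  shows "(cmod (V $$ (b, x)))\<^sup>2 = 1 / 2 ^ n"
proof -
  have nd: "nondegenerate_signs n (\<lambda>i j. zsign (zset n P v j) 0 * zsign {i} (2 ^ j))"
    by (rule nondegenerate_signs_delta) (auto simp: zsign_singleton bit_exp_iff)
  have "(cmod ((V * adj (1\<^sub>m (2 ^ n))) $$ (b, x)))\<^sup>2 = 1 / 2 ^ n"
    by (rule mutually_unbiased_if_nondegenerate_signs[OF mub_unitary_is_unitary[OF u] is_unitary_one
          mub_unitary_conj_Zq[OF u] one_conj_Zq _ _ nd b x]) simp_all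
  then show ?thesis
    using is_unitary_carrier[OF mub_unitary_is_unitary[OF u]] by simp
qed

lemma ens_mutually_unbiased:
  assumes irr: "irreducible P" and dP: "degree P = n"
    and hU: "\<forall>v<2 ^ n. mub_unitary n P v (U v)"
    and k: "k \<in> ens_index n" and k': "k' \<in> ens_index n" and kk': "k \<noteq> k'"
    and b: "b < 2 ^ n" and x: "x < 2 ^ n"
  shows "(cmod ((ens n U k * adj (ens n U k')) $$ (b, x)))\<^sup>2 = 1 / 2 ^ n"
proof (cases k)
  case None
  then obtain v' where k': "k' = Some v'" "v' < 2 ^ n"
    using kk' k' by (auto simp: ens_index_def)
  then have u': "mub_unitary n P v' (U v')"
    using hU by blast
  show ?thesis
    using None k'(1) mub_unitary_unbiased_computational[OF u' x b]
      is_unitary_carrier[OF mub_unitary_is_unitary[OF u']] b x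
    by (simp add: ens_def)
next
  case (Some v)
  then have v: "v < 2 ^ n" and u: "mub_unitary n P v (U v)"
    using k hU by (auto simp: ens_index_def)
  show ?thesis
  proof (cases k')
    case None
    then show ?thesis
      using Some mub_unitary_unbiased_computational[OF u b x] is_unitary_carrier[OF mub_unitary_is_unitary[OF u]]
      by (simp add: ens_def)
  next
    case (Some v')
    then have v': "v' < 2 ^ n" "v \<noteq> v'" and u': "mub_unitary n P v' (U v')"
      using k' kk' \<open>k = Some v\<close> hU by (auto simp: ens_index_def)
    show ?thesis
      unfolding Some \<open>k = Some v\<close> ens_def option.case
      by (rule mutually_unbiased_if_nondegenerate_signs[OF mub_unitary_is_unitary[OF u]
            mub_unitary_is_unitary[OF u'] mub_unitary_conj_Zq[OF u] mub_unitary_conj_Zq[OF u'] _ _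
            nondegenerate_signs_mub[OF irr dP v v'] b x]) simp_all
  qed
qed

section \<open>The shadow estimator\<close>

lemma sum_swap_3:
  "(\<Sum>s\<in>B. \<Sum>b1\<in>C. \<Sum>b2\<in>D. f s b1 b2) = (\<Sum>b1\<in>C. \<Sum>b2\<in>D. \<Sum>s\<in>B. f s b1 b2)"
proof -
  have "(\<Sum>s\<in>B. \<Sum>b1\<in>C. \<Sum>b2\<in>D. f s b1 b2) = (\<Sum>b1\<in>C. \<Sum>s\<in>B. \<Sum>b2\<in>D. f s b1 b2)"
    by (rule sum.swap)
  also have "\<dots> = (\<Sum>b1\<in>C. \<Sum>b2\<in>D. \<Sum>s\<in>B. f s b1 b2)"
    by (rule sum.cong[OF refl], rule sum.swap)
  finally show ?thesis .
qed

lemma sum_swap_4: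
  "(\<Sum>r\<in>A. \<Sum>s\<in>B. \<Sum>b1\<in>C. \<Sum>b2\<in>D. f r s b1 b2) = (\<Sum>b1\<in>C. \<Sum>b2\<in>D. \<Sum>r\<in>A. \<Sum>s\<in>B. f r s b1 b2)"
proof -
  have "(\<Sum>r\<in>A. \<Sum>s\<in>B. \<Sum>b1\<in>C. \<Sum>b2\<in>D. f r s b1 b2) = (\<Sum>r\<in>A. \<Sum>b1\<in>C. \<Sum>b2\<in>D. \<Sum>s\<in>B. f r s b1 b2)"
    by (rule sum.cong[OF refl], rule sum_swap_3)
  also have "\<dots> = (\<Sum>b1\<in>C. \<Sum>b2\<in>D. \<Sum>r\<in>A. \<Sum>s\<in>B. f r s b1 b2)"
    by (rule sum_swap_3)
  finally show ?thesis .
qed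

lemma index_phi:
  assumes "V \<in> carrier_mat (2 ^ n) (2 ^ n)" "r < 2 ^ n" "b < 2 ^ n"
  shows "phi n V b $ r = cnj (V $$ (b, r))"
  using assms by (simp add: phi_def ket_def)

lemma index_O_F:
  assumes "V \<in> carrier_mat (2 ^ n) (2 ^ n)" "r < 2 ^ n" "s < 2 ^ n"
  shows "O_F n V Ob $$ (r, s) =
    (\<Sum>b1<2 ^ n. \<Sum>b2<2 ^ n. if b1 \<noteq> b2 then Oel n V Ob b1 b2 * cnj (V $$ (b1, r)) * V $$ (b2, s) else 0)"
  using assms unfolding O_F_def by (auto simp: index_phi intro!: sum.cong)

lemma dim_O_F [simp]: "dim_row (O_F n V Ob) = 2 ^ n" "dim_col (O_F n V Ob) = 2 ^ n"
  by (simp_all add: O_F_def)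

lemma mtrace_O_F:
  assumes "is_unitary n V"
  shows "mtrace (O_F n V Ob) = 0"
proof -
  let ?O = "Oel n V Ob"
  have "mtrace (O_F n V Ob) =
      (\<Sum>r<2 ^ n. \<Sum>b1<2 ^ n. \<Sum>b2<2 ^ n. if b1 \<noteq> b2 then ?O b1 b2 * (V $$ (b2, r) * cnj (V $$ (b1, r))) else 0)"
    unfolding mtrace_def using is_unitary_carrier[OF assms]
    by (auto simp: index_O_F ac_simps intro!: sum.cong)
  also have "\<dots> = (\<Sum>b1<2 ^ n. \<Sum>b2<2 ^ n. \<Sum>r<2 ^ n. if b1 \<noteq> b2 then ?O b1 b2 * (V $$ (b2, r) * cnj (V $$ (b1, r))) else 0)"
    by (rule sum_swap_3)
  also have "\<dots> = (\<Sum>b1<2 ^ n. \<Sum>b2<2 ^ n. if b1 \<noteq> b2 then ?O b1 b2 * (\<Sum>r<2 ^ n. V $$ (b2, r) * cnj (V $$ (b1, r))) else 0)"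
    by (intro sum.cong refl) (simp add: sum_distrib_left)
  also have "\<dots> = 0"
    by (intro sum.neutral ballI) (simp add: unitary_row_orthonormal[OF assms])
  finally show ?thesis .
qed

lemma sum_O_F_bilinear:
  assumes V: "V \<in> carrier_mat (2 ^ n) (2 ^ n)"
  shows "(\<Sum>r<2 ^ n. \<Sum>s<2 ^ n. O_F n V Ob $$ (r, s) * (\<alpha> r * \<beta> s)) =
    (\<Sum>b1<2 ^ n. \<Sum>b2<2 ^ n. if b1 \<noteq> b2 then Oel n V Ob b1 b2 *
      ((\<Sum>r<2 ^ n. cnj (V $$ (b1, r)) * \<alpha> r) * (\<Sum>s<2 ^ n. V $$ (b2, s) * \<beta> s)) else 0)"
proof -
  let ?c = "\<lambda>r s b1 b2. (if b1 \<noteq> b2 then Oel n V Ob b1 b2 * cnj (V $$ (b1, r)) * V $$ (b2, s) else 0) * (\<alpha> r * \<beta> s)"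
  have "(\<Sum>r<2 ^ n. \<Sum>s<2 ^ n. O_F n V Ob $$ (r, s) * (\<alpha> r * \<beta> s)) =
      (\<Sum>r<2 ^ n. \<Sum>s<2 ^ n. \<Sum>b1<2 ^ n. \<Sum>b2<2 ^ n. ?c r s b1 b2)"
    using V by (intro sum.cong refl) (simp add: index_O_F sum_distrib_right)
  also have "\<dots> = (\<Sum>b1<2 ^ n. \<Sum>b2<2 ^ n. \<Sum>r<2 ^ n. \<Sum>s<2 ^ n. ?c r s b1 b2)"
    by (rule sum_swap_4)
  also have "\<dots> = (\<Sum>b1<2 ^ n. \<Sum>b2<2 ^ n. if b1 \<noteq> b2 then Oel n V Ob b1 b2 *
      ((\<Sum>r<2 ^ n. cnj (V $$ (b1, r)) * \<alpha> r) * (\<Sum>s<2 ^ n. V $$ (b2, s) * \<beta> s)) else 0)"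
    by (intro sum.cong refl) (simp add: sum_product sum_distrib_left ac_simps)
  finally show ?thesis .
qed

lemma index_snapshot:
  assumes V: "V \<in> carrier_mat (2 ^ n) (2 ^ n)" and x: "x < 2 ^ n" and s: "s < 2 ^ n" and r: "r < 2 ^ n"
  shows "snapshot n V x $$ (s, r) =
    of_nat (2 ^ n + 1) * (cnj (V $$ (x, s)) * V $$ (x, r)) - (if s = r then 1 else 0)"
proof -
  let ?E = "couter (ket n x) (ket n x)"
  have E: "?E \<in> carrier_mat (2 ^ n) (2 ^ n)"
    by (simp add: couter_def ket_def)
  have E_index: "?E $$ (u, t) = (if u = x \<and> t = x then 1 else 0)" if "u < 2 ^ n" "t < 2 ^ n" for u t
    using that x by (simp add: couter_def ket_def)
  have M: "(adj V * ?E) $$ (s, t) = cnj (V $$ (x, s)) * (if t = x then 1 else 0)" if t: "t < 2 ^ n" for t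
  proof -
    have "(adj V * ?E) $$ (s, t) = (\<Sum>u<2 ^ n. adj V $$ (s, u) * ?E $$ (u, t))"
      using V E s t by (simp add: index_mult_mat_sum del: index_mult_mat(1))
    also have "\<dots> = (\<Sum>u<2 ^ n. if u = x then cnj (V $$ (x, s)) * (if t = x then 1 else 0) else 0)"
      using V s t by (intro sum.cong refl) (auto simp: E_index)
    finally show ?thesis
      using x by simp
  qed
  have "(adj V * ?E * V) $$ (s, r) = (\<Sum>t<2 ^ n. (adj V * ?E) $$ (s, t) * V $$ (t, r))"
    using V E s r by (subst index_mult_mat_sum) simp_all
  also have "\<dots> = (\<Sum>t<2 ^ n. if t = x then cnj (V $$ (x, s)) * V $$ (x, r) else 0)"
    using M by (intro sum.cong refl) auto
  also have "\<dots> = cnj (V $$ (x, s)) * V $$ (x, r)"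
    using x by simp
  finally show ?thesis
    unfolding snapshot_def using V E s r by simp
qed

lemma mtrace_O_F_snapshot:
  assumes uV: "is_unitary n V" and uV': "is_unitary n V'" and x: "x < 2 ^ n"
  shows "mtrace (O_F n V Ob * snapshot n V' x) = of_nat (2 ^ n + 1) *
     (\<Sum>b1<2 ^ n. \<Sum>b2<2 ^ n. if b1 \<noteq> b2 then Oel n V Ob b1 b2 *
         (cnj ((V * adj V') $$ (b1, x)) * (V * adj V') $$ (b2, x)) else 0)"
proof -
  have V: "V \<in> carrier_mat (2 ^ n) (2 ^ n)" and V': "V' \<in> carrier_mat (2 ^ n) (2 ^ n)"
    using uV uV' by (auto simp: is_unitary_carrier)
  let ?F = "O_F n V Ob"
  have "mtrace (?F * snapshot n V' x) = (\<Sum>r<2 ^ n. \<Sum>s<2 ^ n. ?F $$ (r, s) * snapshot n V' x $$ (s, r))"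
    unfolding mtrace_def by (simp add: snapshot_def index_mult_mat_sum del: index_mult_mat(1))
  also have "\<dots> = (\<Sum>r<2 ^ n. \<Sum>s<2 ^ n. of_nat (2 ^ n + 1) * (?F $$ (r, s) * (V' $$ (x, r) * cnj (V' $$ (x, s))))
      - (if s = r then ?F $$ (r, s) else 0))"
    using V' x by (intro sum.cong refl) (auto simp: index_snapshot algebra_simps)
  also have "\<dots> = of_nat (2 ^ n + 1) * (\<Sum>r<2 ^ n. \<Sum>s<2 ^ n. ?F $$ (r, s) * (V' $$ (x, r) * cnj (V' $$ (x, s))))
      - mtrace ?F"
    unfolding mtrace_def by (simp add: sum_subtractf sum_distrib_left)
  also have "(\<Sum>r<2 ^ n. \<Sum>s<2 ^ n. ?F $$ (r, s) * (V' $$ (x, r) * cnj (V' $$ (x, s)))) =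
      (\<Sum>b1<2 ^ n. \<Sum>b2<2 ^ n. if b1 \<noteq> b2 then Oel n V Ob b1 b2 *
         ((\<Sum>r<2 ^ n. cnj (V $$ (b1, r)) * V' $$ (x, r)) * (\<Sum>s<2 ^ n. V $$ (b2, s) * cnj (V' $$ (x, s)))) else 0)"
    by (rule sum_O_F_bilinear[OF V])
  also have "\<dots> = (\<Sum>b1<2 ^ n. \<Sum>b2<2 ^ n. if b1 \<noteq> b2 then Oel n V Ob b1 b2 *
         (cnj ((V * adj V') $$ (b1, x)) * (V * adj V') $$ (b2, x)) else 0)"
    using V V' x by (intro sum.cong refl) (simp add: index_mult_mat_sum mult.commute del: index_mult_mat(1))
  finally show ?thesis
    using mtrace_O_F[OF uV] by simp
qed

text \<open>The outcome probability is the expectation of \<open>\<rho>\<close> in the vector \<open>W\<^sup>\<dagger>|x\<rangle>\<close>.\<close>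
lemma shadow_prob_nonneg:
  assumes W: "W \<in> carrier_mat (2 ^ n) (2 ^ n)" and dens: "is_density n \<rho>" and x: "x < 2 ^ n"
  shows "0 \<le> shadow_prob n \<rho> W x"
proof -
  have rho: "\<rho> \<in> carrier_mat (2 ^ n) (2 ^ n)"
    using dens by (simp add: is_density_def is_hermitian_def)
  define y where "y = vec (2 ^ n) (\<lambda>k. cnj (W $$ (x, k)))"
  have "(W * \<rho> * adj W) $$ (x, x) = (\<Sum>l<2 ^ n. \<Sum>k<2 ^ n. W $$ (x, k) * \<rho> $$ (k, l) * cnj (W $$ (x, l)))"
    using W rho x by (simp add: index_mult_mat_sum sum_distrib_right del: index_mult_mat(1))
  also have "\<dots> = (\<Sum>k<2 ^ n. W $$ (x, k) * (\<Sum>l<2 ^ n. \<rho> $$ (k, l) * cnj (W $$ (x, l))))"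
    by (subst sum.swap) (simp add: sum_distrib_left ac_simps)
  also have "\<dots> = cinner y (\<rho> *\<^sub>v y)"
    using rho by (simp add: cinner_def y_def scalar_prod_def atLeast0LessThan)
  finally have "(W * \<rho> * adj W) $$ (x, x) = cinner y (\<rho> *\<^sub>v y)" .
  moreover have "y \<in> carrier_vec (2 ^ n)"
    by (simp add: y_def)
  ultimately show ?thesis
    using dens unfolding is_density_def shadow_prob_def by simp
qed

lemma sum_shadow_prob:
  assumes uW: "is_unitary n W" and dens: "is_density n \<rho>"
  shows "(\<Sum>x<2 ^ n. shadow_prob n \<rho> W x) = 1 / (2 ^ n + 1)"
proof -
  have W: "W \<in> carrier_mat (2 ^ n) (2 ^ n)" and rho: "\<rho> \<in> carrier_mat (2 ^ n) (2 ^ n)"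
    using uW dens by (auto simp: is_unitary_carrier is_density_def is_hermitian_def)
  have "mtrace (W * \<rho> * adj W) = mtrace (adj W * (W * \<rho>))"
    using W rho by (intro mtrace_mult_comm) auto
  also have "\<dots> = 1"
    using uW rho dens by (simp add: unitary_mult_cancel is_density_def)
  finally have "(\<Sum>x<2 ^ n. Re ((W * \<rho> * adj W) $$ (x, x))) = 1"
    using W rho unfolding mtrace_def by (simp flip: Re_sum)
  then show ?thesis
    unfolding shadow_prob_def by (simp flip: sum_divide_distrib)
qed

lemma offdiag_sum_bound:
  assumes G: "\<forall>b<2 ^ n. (cmod (G $$ (b, x)))\<^sup>2 = 1 / 2 ^ n"
  shows "cmod (\<Sum>b1<2 ^ n. \<Sum>b2<2 ^ n. if b1 \<noteq> b2 then Oel n V Ob b1 b2 *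
      (cnj (G $$ (b1, x)) * G $$ (b2, x)) else 0) \<le> C_l1 n V Ob / 2 ^ n"
proof -
  have "cmod (cnj (G $$ (b1, x)) * G $$ (b2, x)) = 1 / 2 ^ n" if "b1 < 2 ^ n" "b2 < 2 ^ n" for b1 b2
  proof -
    have "cmod (G $$ (b1, x)) = cmod (G $$ (b2, x))"
      using G that by (metis norm_ge_zero power2_eq_iff_nonneg)
    then show ?thesis
      using G that by (simp add: norm_mult power2_eq_square)
  qed
  then have "(\<Sum>b1<2 ^ n. \<Sum>b2<2 ^ n. cmod (if b1 \<noteq> b2 then Oel n V Ob b1 b2 *
      (cnj (G $$ (b1, x)) * G $$ (b2, x)) else 0)) = C_l1 n V Ob / 2 ^ n"
    unfolding C_l1_def sum_divide_distrib by (intro sum.cong refl) (simp add: norm_mult)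
  moreover have "cmod (\<Sum>b1<2 ^ n. \<Sum>b2<2 ^ n. if b1 \<noteq> b2 then Oel n V Ob b1 b2 *
      (cnj (G $$ (b1, x)) * G $$ (b2, x)) else 0) \<le> (\<Sum>b1<2 ^ n. \<Sum>b2<2 ^ n. cmod (if b1 \<noteq> b2 then
      Oel n V Ob b1 b2 * (cnj (G $$ (b1, x)) * G $$ (b2, x)) else 0))"
    by (rule order_trans[OF norm_sum sum_mono[OF norm_sum]])
  ultimately show ?thesis
    by simp
qed

text \<open>For \<open>U' = U\<close> the estimator vanishes identically: \<open>O\<^sub>F\<close> has no diagonal in the measured basis.\<close>
lemma estimator_O_F_sq_le:
  assumes irr: "irreducible P" and dP: "degree P = n" and hU: "\<forall>v<2 ^ n. mub_unitary n P v (U v)"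
    and k: "k \<in> ens_index n" and k': "k' \<in> ens_index n" and x: "x < 2 ^ n"
  shows "(estimator n (O_F n (ens n U k) Ob) (ens n U k') x)\<^sup>2
    \<le> (if k' = k then 0 else ((2 ^ n + 1) * C_l1 n (ens n U k) Ob / 2 ^ n)\<^sup>2)"
proof -
  let ?G = "ens n U k * adj (ens n U k')"
  define S where "S = (\<Sum>b1<2 ^ n. \<Sum>b2<2 ^ n. if b1 \<noteq> b2 then Oel n (ens n U k) Ob b1 b2 *
    (cnj (?G $$ (b1, x)) * ?G $$ (b2, x)) else 0)"
  have uk: "is_unitary n (ens n U k)" and uk': "is_unitary n (ens n U k')"
    using ens_is_unitary hU k k' by blast+
  have "estimator n (O_F n (ens n U k) Ob) (ens n U k') x = (2 ^ n + 1) * Re S"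
    unfolding estimator_def S_def mtrace_O_F_snapshot[OF uk uk' x] by simp
  moreover have "(Re S)\<^sup>2 \<le> (cmod S)\<^sup>2"
    using abs_Re_le_cmod[of S] by (simp add: abs_le_square_iff[symmetric])
  ultimately have est: "(estimator n (O_F n (ens n U k) Ob) (ens n U k') x)\<^sup>2 \<le> ((2 ^ n + 1) * cmod S)\<^sup>2"
    by (simp add: power_mult_distrib mult_left_mono)
  have "S = 0" if "k' = k"
  proof -
    have "?G = 1\<^sub>m (2 ^ n)"
      using uk that by (simp add: is_unitary_def)
    then show ?thesis
      unfolding S_def using x by (intro sum.neutral ballI) auto
  qed
  moreover have "((2 ^ n + 1) * cmod S)\<^sup>2 \<le> ((2 ^ n + 1) * C_l1 n (ens n U k) Ob / 2 ^ n)\<^sup>2" if "k' \<noteq> k"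
  proof -
    have "cmod S \<le> C_l1 n (ens n U k) Ob / 2 ^ n"
      unfolding S_def using ens_mutually_unbiased[OF irr dP hU k k' _ _ x] that
      by (intro offdiag_sum_bound) auto
    then show ?thesis
      by (intro power_mono) (auto simp flip: times_divide_eq_right intro: mult_left_mono)
  qed
  ultimately show ?thesis
    using est by auto
qed

lemma card_ens_index: "card (ens_index n) = 2 ^ n + 1"
  by (simp add: ens_index_def card_image)

lemma sum_ens_index_off:
  assumes k: "k \<in> ens_index n"
  shows "(\<Sum>k'\<in>ens_index n. if k' = k then 0 else c) = 2 ^ n * (c :: real)"
proof -
  have fin: "finite (ens_index n)"
    by (simp add: ens_index_def)
  then have "card (ens_index n - {k}) = 2 ^ n"
    using card_ens_index k by (simp add: card_Diff_singleton)
  moreover have "(\<Sum>k'\<in>ens_index n. if k' = k then 0 else c) = (\<Sum>k'\<in>ens_index n - {k}. c)"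
    using sum.remove[OF fin k, of "\<lambda>k'. if k' = k then 0 else c"] by simp
  ultimately show ?thesis
    by simp
qed

theorem theorem2:
  fixes n :: nat and P :: "gf2 poly" and U :: "nat \<Rightarrow> complex mat"
    and k :: "nat option" and Ob \<rho> :: "complex mat"
  assumes "irreducible P" and "degree P = n"
    and "\<forall>v<2 ^ n. mub_unitary n P v (U v)"
    and "k \<in> ens_index n"
    and "is_hermitian n Ob"
    and "is_density n \<rho>"
  shows "shadow_var n U \<rho> (O_F n (ens n U k) Ob)
           \<le> (2 ^ n + 1) / 2 ^ n * (C_l1 n (ens n U k) Ob)\<^sup>2"
proof -
  note irr = assms(1) and dP = assms(2) and hU = assms(3) and k = assms(4) and dens = assms(6)
  let ?A = "O_F n (ens n U k) Ob" and ?C = "C_l1 n (ens n U k) Ob"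
  let ?p = "\<lambda>k' x. shadow_prob n \<rho> (ens n U k') x" and ?e = "\<lambda>k' x. estimator n ?A (ens n U k') x"
  let ?B = "\<lambda>k'. if k' = k then 0 else ((2 ^ n + 1) * ?C / 2 ^ n)\<^sup>2"
  have "shadow_var n U \<rho> ?A \<le> (\<Sum>k'\<in>ens_index n. \<Sum>x<2 ^ n. ?p k' x * (?e k' x)\<^sup>2)"
    unfolding shadow_var_def by simp
  also have "\<dots> \<le> (\<Sum>k'\<in>ens_index n. \<Sum>x<2 ^ n. ?p k' x * ?B k')"
    using shadow_prob_nonneg[OF is_unitary_carrier[OF ens_is_unitary[OF _ hU]] dens]
      estimator_O_F_sq_le[OF irr dP hU k]
    by (intro sum_mono mult_left_mono) auto
  also have "\<dots> = (\<Sum>k'\<in>ens_index n. if k' = k then 0 else ((2 ^ n + 1) * ?C / 2 ^ n)\<^sup>2 / (2 ^ n + 1))"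
    using sum_shadow_prob[OF ens_is_unitary[OF _ hU] dens] by (intro sum.cong refl) (simp flip: sum_distrib_right)
  also have "\<dots> = 2 ^ n * (((2 ^ n + 1) * ?C / 2 ^ n)\<^sup>2 / (2 ^ n + 1))"
    by (rule sum_ens_index_off[OF k])
  also have "\<dots> = (2 ^ n + 1) / 2 ^ n * ?C\<^sup>2"
    unfolding power2_eq_square by (simp add: divide_simps)
  finally show ?thesis .
qed

end
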